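(* In any $\{K_3,K_4\}$-decomposition of $K_{18}$ with $\alpha=13$, every vertex $x$ of $K_{18}$ satisfies $\alpha_x\in\{1,4\}$.
   Context: A $\{K_3,K_4\}$-decomposition of $K_v$ is a collection of subgraphs, each isomorphic to $K_3$ or $K_4$ (triples and quadruples), such that every edge of $K_v$ lies in exactly one of them. $\alpha$ is the number of copies of $K_3$ in the decomposition, and for a vertex $x$, $\alpha_x$ is the number of copies of $K_3$ in the decomposition containing $x$. *)

theory Defs
  imports Main
begin

text \<open>A {K3,K4}-decomposition is a collection D of blocks (vertex subsets of size 3 or 4,
  i.e. copies of K3 or K4) such that every edge lies in exactly one block.\<close>

definition K34_decomposition :: "nat \<Rightarrow> nat set set \<Rightarrow> bool" where
  "K34_decomposition v D \<longleftrightarrow>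
     (\<forall>B\<in>D. B \<subseteq> {0..<v} \<and> (card B = 3 \<or> card B = 4)) \<and>
     (\<forall>x\<in>{0..<v}. \<forall>y\<in>{0..<v}. x \<noteq> y \<longrightarrow> (\<exists>!B. B \<in> D \<and> x \<in> B \<and> y \<in> B))"

definition alpha :: "nat set set \<Rightarrow> nat" where
  "alpha D = card {B\<in>D. card B = 3}"

definition alpha_at :: "nat set set \<Rightarrow> nat \<Rightarrow> nat" where
  "alpha_at D x = card {B\<in>D. card B = 3 \<and> x \<in> B}"

end

theory Submission
  imports Defs
begin

(* Counting the edges at a vertex a gives 2 alpha_a + 3 beta_a = 17, where beta_a counts the
   quadruples at a; so alpha_a is 1, 4 or 7, and the alpha_a sum to 3 alpha = 39.
   Suppose alpha_x = 7 and call a vertex heavy if it lies in more than one triangle. The h heavy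
   vertices carry 39 - (18 - h) = 21 + h triangle incidences, and at least 7 + 4 (h - 1), so h <= 6.
   Let E count the pairs of a heavy and a light vertex sharing a triangle. A heavy vertex a has
   2 alpha_a triangle neighbours, at most h - 1 of them heavy, so E >= 2 (21 + h) - h (h - 1).
   A light vertex has only two triangle neighbours; moreover the seven triangles at x meet only
   in x, so one of them avoids the other h - 1 <= 5 heavy vertices, which yields a light vertex
   whose only heavy neighbour is x. Hence E < 2 (18 - h), and the two bounds on E force h > 6. *)

locale K34_decomp =
  fixes v :: nat and D :: "nat set set"
  assumes decomp: "K34_decomposition v D"
begin

lemma block_subset: "B \<in> D \<Longrightarrow> B \<subseteq> {0..<v}"
  using decomp unfolding K34_decomposition_def by blast

lemma block_card: "B \<in> D \<Longrightarrow> card B = 3 \<or> card B = 4"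
  using decomp unfolding K34_decomposition_def by blast

lemma finite_block: "B \<in> D \<Longrightarrow> finite B"
  using block_subset finite_subset by blast

lemma finite_blocks: "finite D"
  using block_subset finite_subset[of D "Pow {0..<v}"] by blast

lemma block_unique:
  assumes "B1 \<in> D" "B2 \<in> D" "a \<in> B1" "b \<in> B1" "a \<in> B2" "b \<in> B2" "a \<noteq> b"
  shows "B1 = B2"
proof -
  have "a \<in> {0..<v}" "b \<in> {0..<v}"
    using block_subset assms by blast+
  then have "\<exists>!B. B \<in> D \<and> a \<in> B \<and> b \<in> B"
    using decomp \<open>a \<noteq> b\<close> unfolding K34_decomposition_def by blast
  then show ?thesis
    using assms by blast
qed

lemma block_exists: "a \<in> {0..<v} \<Longrightarrow> b \<in> {0..<v} \<Longrightarrow> a \<noteq> b \<Longrightarrow> \<exists>B\<in>D. a \<in> B \<and> b \<in> B"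
  using decomp unfolding K34_decomposition_def by blast

definition blocks_at :: "nat \<Rightarrow> nat \<Rightarrow> nat set set" where
  "blocks_at k a = {B \<in> D. card B = k \<and> a \<in> B}"

definition nbr :: "nat \<Rightarrow> nat \<Rightarrow> nat set" where
  "nbr k a = (\<Union>B \<in> blocks_at k a. B - {a})"

lemma finite_blocks_at: "finite (blocks_at k a)"
  using finite_blocks by (simp add: blocks_at_def)

lemma alpha_at_eq_card_blocks_at: "alpha_at D a = card (blocks_at 3 a)"
  by (simp add: alpha_at_def blocks_at_def)

lemma nbr_subset: "nbr k a \<subseteq> {0..<v} - {a}"
  using block_subset by (auto simp: nbr_def blocks_at_def)

lemma finite_nbr: "finite (nbr k a)"
  using nbr_subset finite_subset by blast

lemma mem_nbr_iff: "b \<in> nbr k a \<longleftrightarrow> b \<noteq> a \<and> (\<exists>B\<in>D. card B = k \<and> a \<in> B \<and> b \<in> B)"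
  by (auto simp: nbr_def blocks_at_def)

lemma nbr_sym: "b \<in> nbr k a \<longleftrightarrow> a \<in> nbr k b"
  unfolding mem_nbr_iff by blast

lemma card_nbr: "card (nbr k a) = (k - 1) * card (blocks_at k a)"
proof -
  have "card (nbr k a) = (\<Sum>B \<in> blocks_at k a. card (B - {a}))"
    unfolding nbr_def
  proof (rule card_UN_disjoint)
    show "\<forall>B\<in>blocks_at k a. \<forall>B'\<in>blocks_at k a. B \<noteq> B' \<longrightarrow> (B - {a}) \<inter> (B' - {a}) = {}"
      using block_unique unfolding blocks_at_def by blast
  qed (use finite_blocks_at finite_block in \<open>auto simp: blocks_at_def\<close>)
  also have "\<dots> = (\<Sum>B \<in> blocks_at k a. k - 1)"
    by (rule sum.cong) (auto simp: blocks_at_def finite_block)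
  finally show ?thesis
    by simp
qed

lemma card_nbr_3: "card (nbr 3 a) = 2 * alpha_at D a"
  using card_nbr[of 3 a] by (simp add: alpha_at_eq_card_blocks_at)

lemma nbr_3_Un_nbr_4:
  assumes "a \<in> {0..<v}"
  shows "nbr 3 a \<union> nbr 4 a = {0..<v} - {a}"
proof
  show "nbr 3 a \<union> nbr 4 a \<subseteq> {0..<v} - {a}"
    using nbr_subset by blast
next
  show "{0..<v} - {a} \<subseteq> nbr 3 a \<union> nbr 4 a"
  proof
    fix b assume b: "b \<in> {0..<v} - {a}"
    then obtain B where "B \<in> D" "a \<in> B" "b \<in> B"
      using block_exists assms by blast
    with b block_card[of B] show "b \<in> nbr 3 a \<union> nbr 4 a"
      by (auto simp: mem_nbr_iff)
  qed
qed

lemma nbr_3_Int_nbr_4: "nbr 3 a \<inter> nbr 4 a = {}"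
proof (rule ccontr)
  assume "nbr 3 a \<inter> nbr 4 a \<noteq> {}"
  then obtain b B B' where "b \<noteq> a" "B \<in> D" "card B = 3" "a \<in> B" "b \<in> B"
    "B' \<in> D" "card B' = 4" "a \<in> B'" "b \<in> B'"
    by (auto simp: mem_nbr_iff)
  then show False
    using block_unique[of B B' a b] by simp
qed

lemma degree_eq:
  assumes "a \<in> {0..<v}"
  shows "2 * alpha_at D a + 3 * card (blocks_at 4 a) = v - 1"
proof -
  have "card (nbr 3 a) + card (nbr 4 a) = card (nbr 3 a \<union> nbr 4 a)"
    by (rule card_Un_disjoint[symmetric]) (simp_all add: finite_nbr nbr_3_Int_nbr_4)
  also have "\<dots> = v - 1"
    using assms by (simp add: nbr_3_Un_nbr_4)
  finally show ?thesis
    using card_nbr_3 card_nbr[of 4 a] by simp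
qed

lemma sum_alpha_at: "(\<Sum>a \<in> {0..<v}. alpha_at D a) = 3 * alpha D"
proof -
  have "(\<Sum>a \<in> {0..<v}. card {B \<in> {B \<in> D. card B = 3}. a \<in> B}) = 3 * card {B \<in> D. card B = 3}"
  proof (rule sum_multicount)
    show "\<forall>B \<in> {B \<in> D. card B = 3}. card {a \<in> {0..<v}. a \<in> B} = 3"
    proof
      fix B assume "B \<in> {B \<in> D. card B = 3}"
      moreover from this have "{a \<in> {0..<v}. a \<in> B} = B"
        using block_subset by blast
      ultimately show "card {a \<in> {0..<v}. a \<in> B} = 3"
        by simp
    qed
  qed (use finite_blocks in auto)
  moreover have "{B \<in> {B \<in> D. card B = 3}. a \<in> B} = {B \<in> D. card B = 3 \<and> a \<in> B}" for a
    by blast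
  ultimately show ?thesis
    by (simp add: alpha_def alpha_at_def)
qed

lemma nbr_3_of_single_triangle:
  assumes "alpha_at D l = 1" "t \<in> blocks_at 3 l"
  shows "nbr 3 l = t - {l}"
proof -
  have "blocks_at 3 l = {t}"
    using assms by (metis alpha_at_eq_card_blocks_at card_1_singletonE singletonD)
  then show ?thesis
    by (simp add: nbr_def)
qed

lemma alpha_at_le_card_if_triangles_meet:
  assumes "finite S" "x \<notin> S" "\<forall>t \<in> blocks_at 3 x. t \<inter> S \<noteq> {}"
  shows "alpha_at D x \<le> card S"
proof -
  have disjoint: "\<forall>t\<in>blocks_at 3 x. \<forall>t'\<in>blocks_at 3 x. t \<noteq> t' \<longrightarrow> (t \<inter> S) \<inter> (t' \<inter> S) = {}"
    using block_unique \<open>x \<notin> S\<close> unfolding blocks_at_def by blast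
  have "alpha_at D x = (\<Sum>t \<in> blocks_at 3 x. 1)"
    by (simp add: alpha_at_eq_card_blocks_at)
  also have "\<dots> \<le> (\<Sum>t \<in> blocks_at 3 x. card (t \<inter> S))"
    using assms(1,3) by (intro sum_mono) (simp add: Suc_le_eq card_gt_0_iff)
  also have "\<dots> = card (\<Union>t \<in> blocks_at 3 x. t \<inter> S)"
    using disjoint finite_blocks_at \<open>finite S\<close> by (intro card_UN_disjoint[symmetric]) auto
  also have "\<dots> \<le> card S"
    using \<open>finite S\<close> by (intro card_mono) auto
  finally show ?thesis .
qed

definition light :: "nat set" where
  "light = {a \<in> {0..<v}. alpha_at D a = 1}"

definition heavy :: "nat set" where
  "heavy = {a \<in> {0..<v}. alpha_at D a \<noteq> 1}"

lemma finite_light: "finite light"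
  by (simp add: light_def)

lemma finite_heavy: "finite heavy"
  by (simp add: heavy_def)

lemma heavy_Un_light: "heavy \<union> light = {0..<v}"
  by (auto simp: heavy_def light_def)

lemma heavy_Int_light: "heavy \<inter> light = {}"
  by (auto simp: heavy_def light_def)

lemma card_heavy_add_card_light: "card heavy + card light = v"
  using card_Un_disjoint[OF finite_heavy finite_light heavy_Int_light] heavy_Un_light by simp

lemma sum_alpha_at_heavy: "(\<Sum>a \<in> heavy. alpha_at D a) + card light = 3 * alpha D"
proof -
  have "(\<Sum>a \<in> light. alpha_at D a) = card light"
    by (simp add: light_def)
  then show ?thesis
    using sum.union_disjoint[OF finite_heavy finite_light heavy_Int_light, of "alpha_at D"]
    by (simp add: heavy_Un_light sum_alpha_at)
qed

lemma sum_card_nbr_Int_swap: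
  assumes "finite S" "finite T"
  shows "(\<Sum>a \<in> S. card (nbr k a \<inter> T)) = (\<Sum>b \<in> T. card (nbr k b \<inter> S))"
proof -
  have "(\<Sum>a \<in> S. card {b \<in> T. b \<in> nbr k a}) = (\<Sum>b \<in> T. card (nbr k b \<inter> S))"
  proof (rule sum_multicount_gen)
    show "\<forall>b\<in>T. card {a \<in> S. b \<in> nbr k a} = card (nbr k b \<inter> S)"
      by (auto simp: nbr_sym intro: arg_cong[where f = card])
  qed (use assms in auto)
  moreover have "{b \<in> T. b \<in> nbr k a} = nbr k a \<inter> T" for a
    by blast
  ultimately show ?thesis
    by simp
qed

lemma two_sum_alpha_at_heavy_le:
  "2 * (\<Sum>a \<in> heavy. alpha_at D a)
     \<le> (\<Sum>a \<in> heavy. card (nbr 3 a \<inter> light)) + card heavy * (card heavy - 1)"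
proof -
  have "2 * alpha_at D a \<le> card (nbr 3 a \<inter> light) + (card heavy - 1)" if "a \<in> heavy" for a
  proof -
    have "card (nbr 3 a \<inter> heavy) + card (nbr 3 a \<inter> light)
        = card ((nbr 3 a \<inter> heavy) \<union> (nbr 3 a \<inter> light))"
      by (rule card_Un_disjoint[symmetric]) (use finite_nbr heavy_Int_light in auto)
    also have "(nbr 3 a \<inter> heavy) \<union> (nbr 3 a \<inter> light) = nbr 3 a"
      using nbr_subset heavy_Un_light by blast
    finally have "2 * alpha_at D a = card (nbr 3 a \<inter> heavy) + card (nbr 3 a \<inter> light)"
      by (simp add: card_nbr_3)
    moreover have "card (nbr 3 a \<inter> heavy) \<le> card (heavy - {a})"
      using nbr_subset finite_heavy by (intro card_mono) auto
    ultimately show ?thesis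
      using that finite_heavy by simp
  qed
  then have "(\<Sum>a \<in> heavy. 2 * alpha_at D a) \<le> (\<Sum>a \<in> heavy. card (nbr 3 a \<inter> light) + (card heavy - 1))"
    by (rule sum_mono)
  then show ?thesis
    by (simp add: sum_distrib_left sum.distrib)
qed

lemma sum_card_nbr_light_lt:
  assumes "l\<^sub>0 \<in> light" "card (nbr 3 l\<^sub>0 \<inter> heavy) \<le> 1"
  shows "(\<Sum>l \<in> light. card (nbr 3 l \<inter> heavy)) < 2 * card light"
proof -
  have "card (nbr 3 l \<inter> heavy) \<le> 2" if "l \<in> light" for l
    using that card_nbr_3[of l] card_mono[OF finite_nbr Int_lower1, of 3 l heavy]
    by (simp add: light_def)
  then have "(\<Sum>l \<in> light - {l\<^sub>0}. card (nbr 3 l \<inter> heavy)) \<le> card (light - {l\<^sub>0}) * 2"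
    using sum_bounded_above[of "light - {l\<^sub>0}" "\<lambda>l. card (nbr 3 l \<inter> heavy)" 2] by simp
  moreover have "(\<Sum>l \<in> light. card (nbr 3 l \<inter> heavy))
      = card (nbr 3 l\<^sub>0 \<inter> heavy) + (\<Sum>l \<in> light - {l\<^sub>0}. card (nbr 3 l \<inter> heavy))"
    using sum.remove[OF finite_light assms(1)] .
  moreover have "card light \<noteq> 0"
    using assms(1) finite_light by auto
  then have "card (light - {l\<^sub>0}) + 1 = card light"
    using assms(1) by (simp add: card_Diff_singleton)
  ultimately show ?thesis
    using assms(2) by linarith
qed

lemma light_vertex_with_one_heavy_nbr:
  assumes "x \<in> heavy" "card heavy \<le> alpha_at D x"
  shows "\<exists>l \<in> light. card (nbr 3 l \<inter> heavy) \<le> 1"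
proof -
  have "card heavy \<noteq> 0"
    using assms(1) finite_heavy by auto
  then have "\<not> alpha_at D x \<le> card (heavy - {x})"
    using assms by (simp add: card_Diff_singleton)
  then obtain t where t: "t \<in> blocks_at 3 x" "t \<inter> (heavy - {x}) = {}"
    using alpha_at_le_card_if_triangles_meet[of "heavy - {x}" x] finite_heavy by blast
  have "\<not> t \<subseteq> {x}"
    using t(1) card_mono[of "{x}" t] by (auto simp: blocks_at_def)
  then obtain l where l: "l \<in> t" "l \<noteq> x"
    by blast
  have "l \<in> light"
    using l t block_subset heavy_Un_light unfolding blocks_at_def by blast
  moreover have "nbr 3 l = t - {l}"
    using \<open>l \<in> light\<close> l t(1) by (intro nbr_3_of_single_triangle) (auto simp: light_def blocks_at_def)
  then have "card (nbr 3 l \<inter> heavy) \<le> card {x}"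
    using t(2) by (intro card_mono) auto
  ultimately show ?thesis
    by auto
qed

end

lemma alpha_at_cases_18:
  assumes "K34_decomposition 18 D" "a \<in> {0..<18}"
  shows "alpha_at D a \<in> {1, 4, 7}"
proof -
  interpret K34_decomp 18 D
    using assms(1) by (rule K34_decomp.intro)
  have "2 * alpha_at D a + 3 * card (blocks_at 4 a) = 17"
    using degree_eq[OF assms(2)] by simp
  then have "alpha_at D a = 1 \<or> alpha_at D a = 4 \<or> alpha_at D a = 7"
    by presburger
  then show ?thesis
    by simp
qed

lemma alpha_at_ne_7:
  assumes "K34_decomposition 18 D" "alpha D = 13" "x \<in> {0..<18}"
  shows "alpha_at D x \<noteq> 7"
proof
  interpret K34_decomp 18 D
    using assms(1) by (rule K34_decomp.intro)
  assume x7: "alpha_at D x = 7"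
  let ?h = "card heavy"
  have x_heavy: "x \<in> heavy"
    using assms(3) x7 by (simp add: heavy_def)
  have sum_heavy: "(\<Sum>a \<in> heavy. alpha_at D a) = 21 + ?h"
    using sum_alpha_at_heavy card_heavy_add_card_light assms(2) by simp
  have "(\<Sum>a \<in> heavy - {x}. 4) \<le> (\<Sum>a \<in> heavy - {x}. alpha_at D a)"
    using alpha_at_cases_18[OF assms(1)] by (intro sum_mono) (fastforce simp: heavy_def)
  then have "7 + 4 * (?h - 1) \<le> (\<Sum>a \<in> heavy. alpha_at D a)"
    using sum.remove[OF finite_heavy x_heavy, of "alpha_at D"] x7 x_heavy finite_heavy by simp
  moreover have "?h \<noteq> 0"
    using x_heavy finite_heavy by auto
  ultimately have h_le: "?h \<le> 6"
    using sum_heavy by linarith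
  then obtain l where "l \<in> light" "card (nbr 3 l \<inter> heavy) \<le> 1"
    using light_vertex_with_one_heavy_nbr[OF x_heavy] x7 by auto
  then have "(\<Sum>a \<in> heavy. card (nbr 3 a \<inter> light)) < 2 * card light"
    using sum_card_nbr_light_lt sum_card_nbr_Int_swap[OF finite_heavy finite_light] by simp
  moreover have "?h * (?h - 1) \<le> 6 * (?h - 1)"
    using h_le by (rule mult_le_mono1)
  ultimately show False
    using two_sum_alpha_at_heavy_le sum_heavy card_heavy_add_card_light h_le by linarith
qed

theorem mainTheorem9:
  assumes "K34_decomposition 18 D"
    and "alpha D = 13"
    and "x \<in> {0..<18}"
  shows "alpha_at D x \<in> {1, 4}"
  using alpha_at_cases_18[OF assms(1,3)] alpha_at_ne_7[OF assms] by auto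

end
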